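(* Let $k_1,\dots,k_m$ and $r_1,\dots,r_n$ be positive integers. Then $L_{k_1}\times\cdots\times L_{k_m}\equiv L_{r_1}\times\cdots\times L_{r_n}$ if and only if $m=n$ and there is a permutation $\gamma$ of $\{1,\dots,m\}$ with $k_i=r_{\gamma(i)}$ for all $i$ (i.e. the two products consist of exactly the same devices).
   Context: An abstract storage device (ASD) is a pair $D=(\mathcal{S}_D,\mathcal{P}_D)$, $\mathcal{S}_D$ a finite set and $\mathcal{P}_D$ a finite family of partitions of $\mathcal{S}_D$. The kernel of a function $f$ is the partition of its domain into the nonempty fibers $f^{-1}(y)$. The binary linear device $L_n$ has state space $\{0,1\}^n$ and partition set consisting of the kernels of all $\mathbb{F}_2$-linear maps $\{0,1\}^n\to\{0,1\}$. For a partition $\pi$ of $\mathcal{S}'$ and $\phi:\mathcal{S}\to\mathcal{S}'$, $\pi\circ\phi$ is the partition of $\mathcal{S}$ with $x,y$ in the same block iff $\phi(x),\phi(y)$ are in the same block of $\pi$; $\pi\preceq\rho$ means every block of $\pi$ lies in a block of $\rho$. $D\le D'$ means there exist $\phi:\mathcal{S}_D\to\mathcal{S}_{D'}$, $\alpha:\mathcal{P}_D\to\mathcal{P}_{D'}$ with $\alpha(\pi)\circ\phi\preceq\pi$ for all $\pi\in\mathcal{P}_D$; $D\equiv D'$ means $D\le D'$ and $D'\le D$. The direct product $D\times D'$ has state space $\mathcal{S}_D\times\mathcal{S}_{D'}$ and partition set $\{\pi\times\pi':\pi\in\mathcal{P}_D,\pi'\in\mathcal{P}_{D'}\}$ with $\pi\times\pi'=\{B\times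 B':B\in\pi,B'\in\pi'\}$. *)

theory Defs
  imports Main
begin

text \<open>An abstract storage device: a pair (state set, set of partitions of the state set).\<close>
type_synonym 'a asd = "'a set \<times> 'a set set set"

definition states :: "'a asd \<Rightarrow> 'a set" where "states D = fst D"
definition parts :: "'a asd \<Rightarrow> 'a set set set" where "parts D = snd D"

definition kernel :: "'a set \<Rightarrow> ('a \<Rightarrow> 'b) \<Rightarrow> 'a set set" where
  "kernel S f = (\<lambda>y. {x \<in> S. f x = y}) ` (f ` S)"

text \<open>Binary linear device L_n: states are bit vectors of length n (bool lists),
  partitions are kernels of all F2-linear maps {0,1}^n -> {0,1}
  (additive maps; over F2 additivity is linearity, addition is pointwise xor).\<close>
definition bvec :: "nat \<Rightarrow> bool list set" where
  "bvec n = {xs. length xs = n}"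

definition f2_linear :: "nat \<Rightarrow> (bool list \<Rightarrow> bool) \<Rightarrow> bool" where
  "f2_linear n f \<longleftrightarrow> (\<forall>x\<in>bvec n. \<forall>y\<in>bvec n. f (map2 (\<noteq>) x y) = (f x \<noteq> f y))"

definition lin_dev :: "nat \<Rightarrow> bool list asd" where
  "lin_dev n = (bvec n, {kernel (bvec n) f | f. f2_linear n f})"

definition same_block :: "'b set set \<Rightarrow> 'b \<Rightarrow> 'b \<Rightarrow> bool" where
  "same_block P a b \<longleftrightarrow> (\<exists>B\<in>P. a \<in> B \<and> b \<in> B)"

definition pcomp :: "'a set \<Rightarrow> 'b set set \<Rightarrow> ('a \<Rightarrow> 'b) \<Rightarrow> 'a set set" where
  "pcomp S P \<phi> = (\<lambda>x. {y \<in> S. same_block P (\<phi> x) (\<phi> y)}) ` S"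

definition refines :: "'a set set \<Rightarrow> 'a set set \<Rightarrow> bool" where
  "refines P Q \<longleftrightarrow> (\<forall>B\<in>P. \<exists>C\<in>Q. B \<subseteq> C)"

definition dev_le :: "'a asd \<Rightarrow> 'b asd \<Rightarrow> bool" where
  "dev_le D D' \<longleftrightarrow> (\<exists>\<phi> \<alpha>. \<phi> ` states D \<subseteq> states D' \<and>
     (\<forall>P\<in>parts D. \<alpha> P \<in> parts D' \<and> refines (pcomp (states D) (\<alpha> P) \<phi>) P))"

definition dev_equiv :: "'a asd \<Rightarrow> 'b asd \<Rightarrow> bool" where
  "dev_equiv D D' \<longleftrightarrow> dev_le D D' \<and> dev_le D' D"

definition block_prod :: "'a set set list \<Rightarrow> 'a list set set" where
  "block_prod Ps = {{xs. length xs = length Ps \<and> (\<forall>i<length Ps. xs ! i \<in> Bs ! i)} | Bs.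
        length Bs = length Ps \<and> (\<forall>i<length Ps. Bs ! i \<in> Ps ! i)}"

definition prod_dev :: "'a asd list \<Rightarrow> 'a list asd" where
  "prod_dev Ds =
    ({xs. length xs = length Ds \<and> (\<forall>i<length Ds. xs ! i \<in> states (Ds ! i))},
     {block_prod Ps | Ps. length Ps = length Ds \<and> (\<forall>i<length Ds. Ps ! i \<in> parts (Ds ! i))})"

end

theory Submission
  imports Defs "HOL-Library.Disjoint_Sets" "HOL-Library.FuncSet" "HOL-Combinatorics.List_Permutation"
begin

text \<open>
  A reduction of a separating device D to a device D' has an injective state map and never
  shrinks the largest number of blocks of a partition.  Hence, when D and D' are equivalent,
  the state map is a bijection and every partition of D with the largest number of blocks is
  the pullback of such a partition of D'.  Pulling back along a bijection preserves the number
  of blocks of the meet of two partitions, so the graph on these maximal partitions, in which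
  P and Q are adjacent when their meet has 2|P| blocks, is an invariant of equivalence.

  For L_k1 x ... x L_km the maximal partitions are the kernels of the maps
  (x_i) |-> (a_i . x_i) with all a_i nonzero, and two of them meet in 2^m 2^d blocks, where d is
  the number of coordinates in which the coefficient tuples differ.  So the invariant graph is
  the Hamming graph on the product of the sets of nonzero vectors of F_2^ki.  In a Hamming
  graph a neighbour that differs from a vertex in coordinate i shares exactly n_i - 2
  neighbours with it, n_i being the size of the i-th factor.  Here n_i = 2^ki - 1, so counting
  neighbours by this number recovers, for every t >= 2, how many k_i equal t; the number m
  itself is read off from the largest block count 2^m.
\<close>

section \<open>Partitions, kernels and pullbacks\<close>

lemma partition_on_block_unique:
  assumes "partition_on S P" "b \<in> P" "c \<in> P" "x \<in> b" "x \<in> c"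
  shows "b = c"
  using assms by (auto simp: partition_on_def dest: disjointD)

lemma partition_on_blockD:
  assumes "partition_on S P" "b \<in> P"
  shows "b \<noteq> {}" "b \<subseteq> S"
  using assms partition_onD1 partition_onD3 by blast+

lemma partition_on_block_of:
  assumes "partition_on S P" "x \<in> S"
  shows "{y. same_block P x y} \<in> P" "x \<in> {y. same_block P x y}"
proof -
  obtain b where b: "b \<in> P" "x \<in> b"
    using assms partition_onD1 by blast
  have "{y. same_block P x y} = b"
    using b partition_on_block_unique[OF assms(1)] unfolding same_block_def by blast
  then show "{y. same_block P x y} \<in> P" "x \<in> {y. same_block P x y}"
    using b by auto
qed

lemma block_of_eq_iff:
  assumes "partition_on S P" "x \<in> S" "c \<in> P"
  shows "{y. same_block P x y} = c \<longleftrightarrow> x \<in> c"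
  using partition_on_block_of[OF assms(1,2)] partition_on_block_unique[OF assms(1) _ assms(3)]
  by blast

lemma same_block_iff_block_of_eq:
  assumes "partition_on S P" "x \<in> S" "y \<in> S"
  shows "same_block P x y \<longleftrightarrow> {z. same_block P x z} = {z. same_block P y z}"
proof
  assume "same_block P x y"
  then show "{z. same_block P x z} = {z. same_block P y z}"
    using partition_on_block_unique[OF assms(1)] unfolding same_block_def by blast
next
  assume "{z. same_block P x z} = {z. same_block P y z}"
  then show "same_block P x y"
    using partition_on_block_of(2)[OF assms(1,3)] by blast
qed

lemma kernel_conv: "kernel S f = (\<lambda>z. {x \<in> S. f x = f z}) ` S"
  unfolding kernel_def by auto

lemma kernel_cong_fibres:
  assumes "\<And>x y. x \<in> S \<Longrightarrow> y \<in> S \<Longrightarrow> f x = f y \<longleftrightarrow> g x = g y"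
  shows "kernel S f = kernel S g"
  unfolding kernel_conv using assms by (intro image_cong refl) auto

lemma partition_on_kernel: "partition_on S (kernel S f)"
  unfolding partition_on_def disjoint_def kernel_conv by auto

lemma same_block_kernel: "same_block (kernel S f) x y \<longleftrightarrow> x \<in> S \<and> y \<in> S \<and> f x = f y"
  unfolding same_block_def kernel_conv by auto

lemma card_kernel:
  assumes "finite S"
  shows "card (kernel S f) = card (f ` S)"
  unfolding kernel_def by (rule card_image) (auto simp: inj_on_def)

definition partition_meet :: "'a set set \<Rightarrow> 'a set set \<Rightarrow> 'a set set" where
  "partition_meet P Q = {b \<inter> c | b c. b \<in> P \<and> c \<in> Q \<and> b \<inter> c \<noteq> {}}"

lemma partition_meet_kernel:
  "partition_meet (kernel S f) (kernel S g) = kernel S (\<lambda>x. (f x, g x))"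
proof (rule set_eqI, rule iffI)
  fix X assume "X \<in> partition_meet (kernel S f) (kernel S g)"
  then obtain z1 z2 where z: "z1 \<in> S" "z2 \<in> S" "X \<noteq> {}"
    and X: "X = {x \<in> S. f x = f z1} \<inter> {x \<in> S. g x = g z2}"
    unfolding partition_meet_def kernel_conv by blast
  then obtain w where "w \<in> X" by blast
  then have "w \<in> S" "X = {x \<in> S. (f x, g x) = (f w, g w)}"
    using X by auto
  then show "X \<in> kernel S (\<lambda>x. (f x, g x))"
    unfolding kernel_conv by blast
next
  fix X assume "X \<in> kernel S (\<lambda>x. (f x, g x))"
  then obtain w where w: "w \<in> S" "X = {x \<in> S. (f x, g x) = (f w, g w)}"
    unfolding kernel_conv by blast
  then have "X = {x \<in> S. f x = f w} \<inter> {x \<in> S. g x = g w}" "X \<noteq> {}"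
    by auto
  with w(1) show "X \<in> partition_meet (kernel S f) (kernel S g)"
    unfolding partition_meet_def kernel_conv by blast
qed

(* HOL-Library.Disjoint_Sets has its own constant refines, hence the qualified name. *)
lemma refinesE:
  assumes "Defs.refines R P" "B \<in> R"
  obtains C where "C \<in> P" "B \<subseteq> C"
  using assms unfolding Defs.refines_def by blast

lemma refines_image_block:
  assumes R: "partition_on S R" and P: "partition_on S P" and ref: "Defs.refines R P"
  obtains g where "\<And>r. r \<in> R \<Longrightarrow> g r \<in> P \<and> r \<subseteq> g r" "P = g ` R"
proof -
  define g where "g r = (SOME C. C \<in> P \<and> r \<subseteq> C)" for r
  have g: "g r \<in> P \<and> r \<subseteq> g r" if "r \<in> R" for r
    using ref that unfolding Defs.refines_def g_def by (metis (no_types, lifting) someI_ex)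
  have "C \<in> g ` R" if C: "C \<in> P" for C
  proof -
    obtain x where x: "x \<in> C" "x \<in> S"
      using partition_on_blockD[OF P C] by blast
    then obtain r where r: "r \<in> R" "x \<in> r"
      using R partition_onD1 by blast
    then have "g r = C"
      using partition_on_block_unique[OF P] g[OF r(1)] x(1) C by blast
    with r(1) show ?thesis by blast
  qed
  moreover have "g ` R \<subseteq> P"
    using g by blast
  ultimately have "P = g ` R"
    by blast
  with g show thesis
    by (rule that)
qed

lemma card_le_if_refines:
  assumes "partition_on S R" "partition_on S P" "Defs.refines R P" "finite R"
  shows "card P \<le> card R"
proof -
  obtain g where "\<And>r. r \<in> R \<Longrightarrow> g r \<in> P \<and> r \<subseteq> g r" and gR: "P = g ` R"
    using refines_image_block[OF assms(1-3)] by metis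
  show ?thesis
    unfolding gR by (rule card_image_le[OF assms(4)])
qed

lemma refines_eq_if_card_le:
  assumes R: "partition_on S R" and P: "partition_on S P" and ref: "Defs.refines R P"
    and fin: "finite R" and le: "card R \<le> card P"
  shows "R = P"
proof -
  obtain g where g: "\<And>r. r \<in> R \<Longrightarrow> g r \<in> P \<and> r \<subseteq> g r" and gR: "P = g ` R"
    using refines_image_block[OF R P ref] by metis
  have "card (g ` R) = card R"
    using le card_image_le[OF fin, of g] unfolding gR by linarith
  then have inj: "inj_on g R"
    using eq_card_imp_inj_on[OF fin] by blast
  have "g r = r" if r: "r \<in> R" for r
  proof
    show "g r \<subseteq> r"
    proof
      fix y assume y: "y \<in> g r"
      then have "y \<in> S"
        using g[OF r] P partition_onD1 by blast
      then obtain r' where r': "r' \<in> R" "y \<in> r'"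
        using R partition_onD1 by blast
      then have "g r' = g r"
        using partition_on_block_unique[OF P] g r y by blast
      then show "y \<in> r"
        using inj_onD[OF inj _ r'(1) r] r'(2) by simp
    qed
    show "r \<subseteq> g r"
      using g[OF r] by blast
  qed
  then have "g ` R = R"
    by force
  then show ?thesis
    using gR by blast
qed

lemma pcomp_eq_kernel:
  assumes Q: "partition_on S' Q" and \<phi>: "\<phi> ` S \<subseteq> S'"
  shows "pcomp S Q \<phi> = kernel S (\<lambda>x. {z. same_block Q (\<phi> x) z})"
  unfolding pcomp_def kernel_conv
  using same_block_iff_block_of_eq[OF Q] \<phi> by (intro image_cong refl) auto

lemma partition_on_pcomp:
  assumes "partition_on S' Q" "\<phi> ` S \<subseteq> S'"
  shows "partition_on S (pcomp S Q \<phi>)"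
  unfolding pcomp_eq_kernel[OF assms] by (rule partition_on_kernel)

lemma card_pcomp_le:
  assumes Q: "partition_on S' Q" and \<phi>: "\<phi> ` S \<subseteq> S'" and fin: "finite S'"
  shows "card (pcomp S Q \<phi>) \<le> card Q"
proof -
  let ?B = "\<lambda>x. {z. same_block Q (\<phi> x) z}"
  have sub: "?B ` S \<subseteq> Q"
    using partition_on_block_of(1)[OF Q] \<phi> by blast
  have finQ: "finite Q"
    using finite_elements[OF fin Q] .
  have "card (kernel S ?B) \<le> card (?B ` S)"
    unfolding kernel_def using finite_subset[OF sub finQ] by (rule card_image_le)
  also have "\<dots> \<le> card Q"
    using card_mono[OF finQ sub] .
  finally show ?thesis
    unfolding pcomp_eq_kernel[OF Q \<phi>] .
qed

lemma refines_pcomp_kernel: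
  assumes \<phi>: "\<phi> ` S \<subseteq> S'"
    and fibres: "\<And>x y. x \<in> S \<Longrightarrow> y \<in> S \<Longrightarrow> g' (\<phi> x) = g' (\<phi> y) \<Longrightarrow> g x = g y"
  shows "Defs.refines (pcomp S (kernel S' g') \<phi>) (kernel S g)"
  unfolding Defs.refines_def
proof
  fix B assume "B \<in> pcomp S (kernel S' g') \<phi>"
  then obtain x where B: "B = {y \<in> S. same_block (kernel S' g') (\<phi> x) (\<phi> y)}" and x: "x \<in> S"
    unfolding pcomp_def by (rule imageE)
  have "B \<subseteq> {y \<in> S. g y = g x}"
  proof
    fix y assume "y \<in> B"
    then have "y \<in> S" "g' (\<phi> x) = g' (\<phi> y)"
      unfolding B same_block_kernel by auto
    with fibres[OF x] show "y \<in> {y \<in> S. g y = g x}"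
      by simp
  qed
  moreover have "{y \<in> S. g y = g x} \<in> kernel S g"
    unfolding kernel_conv using x by (rule imageI)
  ultimately show "\<exists>C\<in>kernel S g. B \<subseteq> C"
    by blast
qed

definition pullback :: "'a set \<Rightarrow> ('a \<Rightarrow> 'b) \<Rightarrow> 'b set set \<Rightarrow> 'a set set" where
  "pullback S \<phi> Q = (\<lambda>c. S \<inter> \<phi> -` c) ` Q"

lemma pcomp_bij:
  assumes Q: "partition_on S' Q" and bij: "bij_betw \<phi> S S'"
  shows "pcomp S Q \<phi> = pullback S \<phi> Q"
proof -
  let ?B = "\<lambda>x. {z. same_block Q (\<phi> x) z}"
  have \<phi>: "\<phi> ` S = S'"
    using bij by (simp add: bij_betw_def)
  have "?B ` S = Q"
  proof
    show "?B ` S \<subseteq> Q"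
      using partition_on_block_of(1)[OF Q] \<phi> by blast
    show "Q \<subseteq> ?B ` S"
    proof
      fix c assume c: "c \<in> Q"
      then obtain z where "z \<in> c" "z \<in> S'"
        using partition_on_blockD[OF Q c] by blast
      then obtain x where "x \<in> S" "\<phi> x = z" "?B x = c"
        using \<phi> block_of_eq_iff[OF Q _ c] by blast
      then show "c \<in> ?B ` S"
        by blast
    qed
  qed
  then have "pcomp S Q \<phi> = (\<lambda>c. {x \<in> S. ?B x = c}) ` Q"
    unfolding pcomp_eq_kernel[OF Q equalityD1[OF \<phi>]] kernel_def by simp
  also have "\<dots> = pullback S \<phi> Q"
    unfolding pullback_def using block_of_eq_iff[OF Q] \<phi> by (intro image_cong refl) blast
  finally show ?thesis .
qed

lemma inj_on_vimage_Pow: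
  assumes "bij_betw \<phi> S S'"
  shows "inj_on (\<lambda>c. S \<inter> \<phi> -` c) (Pow S')"
proof (rule inj_onI)
  fix c d assume "c \<in> Pow S'" "d \<in> Pow S'" "S \<inter> \<phi> -` c = S \<inter> \<phi> -` d"
  moreover have "\<phi> ` (S \<inter> \<phi> -` e) = e" if "e \<subseteq> S'" for e
    using that assms by (auto simp: bij_betw_def)
  ultimately show "c = d"
    by (metis PowD)
qed

lemma card_pullback:
  assumes "bij_betw \<phi> S S'" "Q \<subseteq> Pow S'"
  shows "card (pullback S \<phi> Q) = card Q"
  unfolding pullback_def using inj_on_subset[OF inj_on_vimage_Pow[OF assms(1)] assms(2)]
  by (rule card_image)

lemma partition_meet_pullback:
  assumes bij: "bij_betw \<phi> S S'" and "Q \<subseteq> Pow S'" "Q' \<subseteq> Pow S'"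
  shows "partition_meet (pullback S \<phi> Q) (pullback S \<phi> Q') = pullback S \<phi> (partition_meet Q Q')"
proof -
  have empty_iff: "S \<inter> \<phi> -` c = {} \<longleftrightarrow> c = {}" if "c \<subseteq> S'" for c
    using that bij by (auto simp: bij_betw_def)
  let ?v = "\<lambda>c. S \<inter> \<phi> -` c"
  show ?thesis
  proof (rule set_eqI, rule iffI)
    fix X assume "X \<in> partition_meet (pullback S \<phi> Q) (pullback S \<phi> Q')"
    then obtain b c where bc: "b \<in> Q" "c \<in> Q'" "X = ?v b \<inter> ?v c" "X \<noteq> {}"
      unfolding partition_meet_def pullback_def by blast
    then have "X = ?v (b \<inter> c)" "b \<inter> c \<noteq> {}"
      by auto
    with bc(1,2) show "X \<in> pullback S \<phi> (partition_meet Q Q')"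
      unfolding partition_meet_def pullback_def by blast
  next
    fix X assume "X \<in> pullback S \<phi> (partition_meet Q Q')"
    then obtain b c where bc: "b \<in> Q" "c \<in> Q'" "b \<inter> c \<noteq> {}" "X = ?v (b \<inter> c)"
      unfolding partition_meet_def pullback_def by blast
    then have "X \<noteq> {}" "X = ?v b \<inter> ?v c"
      using empty_iff[of "b \<inter> c"] assms(2) by auto
    with bc(1,2) show "X \<in> partition_meet (pullback S \<phi> Q) (pullback S \<phi> Q')"
      unfolding partition_meet_def pullback_def by blast
  qed
qed

section \<open>Separating devices and their maximal partitions\<close>

definition separating :: "'a asd \<Rightarrow> bool" where
  "separating D \<longleftrightarrow> finite (states D) \<and> parts D \<noteq> {} \<and>
     (\<forall>P\<in>parts D. partition_on (states D) P) \<and>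
     (\<forall>x\<in>states D. \<forall>y\<in>states D. x \<noteq> y \<longrightarrow> (\<exists>P\<in>parts D. \<not> same_block P x y))"

lemma separatingD:
  assumes "separating D"
  shows "finite (states D)" "parts D \<noteq> {}" "\<And>P. P \<in> parts D \<Longrightarrow> partition_on (states D) P"
    "\<And>x y. x \<in> states D \<Longrightarrow> y \<in> states D \<Longrightarrow> x \<noteq> y \<Longrightarrow> \<exists>P\<in>parts D. \<not> same_block P x y"
  using assms unfolding separating_def by blast+

lemma separating_finite_parts:
  assumes "separating D"
  shows "finite (parts D)"
proof (rule finite_subset)
  show "parts D \<subseteq> {P. partition_on (states D) P}"
    using separatingD(3)[OF assms] by blast
  show "finite {P. partition_on (states D) P}"
    using separatingD(1)[OF assms] by (rule finitely_many_partition_on)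
qed

definition max_rank :: "'a asd \<Rightarrow> nat" where
  "max_rank D = Max (card ` parts D)"

definition max_parts :: "'a asd \<Rightarrow> 'a set set set" where
  "max_parts D = {P \<in> parts D. card P = max_rank D}"

definition adjacent :: "'a set set \<Rightarrow> 'a set set \<Rightarrow> bool" where
  "adjacent P Q \<longleftrightarrow> card (partition_meet P Q) = 2 * card P"

lemma adjacent_pullback:
  assumes "bij_betw \<phi> S S'" "Q \<subseteq> Pow S'" "Q' \<subseteq> Pow S'"
  shows "adjacent (pullback S \<phi> Q) (pullback S \<phi> Q') \<longleftrightarrow> adjacent Q Q'"
proof -
  have "partition_meet Q Q' \<subseteq> Pow S'"
    using assms(2) unfolding partition_meet_def by blast
  then show ?thesis
    unfolding adjacent_def partition_meet_pullback[OF assms]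
    using card_pullback[OF assms(1)] assms(2) by simp
qed

definition reduction :: "'a asd \<Rightarrow> 'b asd \<Rightarrow> ('a \<Rightarrow> 'b) \<Rightarrow> ('a set set \<Rightarrow> 'b set set) \<Rightarrow> bool" where
  "reduction D D' \<phi> \<alpha> \<longleftrightarrow> \<phi> ` states D \<subseteq> states D' \<and>
     (\<forall>P\<in>parts D. \<alpha> P \<in> parts D' \<and> Defs.refines (pcomp (states D) (\<alpha> P) \<phi>) P)"

lemma dev_le_iff_reduction: "dev_le D D' \<longleftrightarrow> (\<exists>\<phi> \<alpha>. reduction D D' \<phi> \<alpha>)"
  unfolding dev_le_def reduction_def ..

lemma reduction_inj_on:
  assumes D: "separating D" and D': "separating D'" and red: "reduction D D' \<phi> \<alpha>"
  shows "inj_on \<phi> (states D)"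
proof (rule inj_onI, rule ccontr)
  fix x y assume x: "x \<in> states D" and y: "y \<in> states D" and eq: "\<phi> x = \<phi> y" and "x \<noteq> y"
  then obtain P where P: "P \<in> parts D" "\<not> same_block P x y"
    using separatingD(4)[OF D] by blast
  have Q: "partition_on (states D') (\<alpha> P)" and ref: "Defs.refines (pcomp (states D) (\<alpha> P) \<phi>) P"
    using red P(1) separatingD(3)[OF D'] unfolding reduction_def by blast+
  let ?B = "{z \<in> states D. same_block (\<alpha> P) (\<phi> x) (\<phi> z)}"
  have "?B \<in> pcomp (states D) (\<alpha> P) \<phi>"
    unfolding pcomp_def using x by (rule imageI)
  with ref obtain C where "C \<in> P" "?B \<subseteq> C"
    by (rule refinesE)
  moreover have "x \<in> ?B" "y \<in> ?B"
  proof -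
    have "\<phi> x \<in> states D'"
      using red x unfolding reduction_def by blast
    then have "same_block (\<alpha> P) (\<phi> x) (\<phi> x)"
      using partition_on_block_of(2)[OF Q] by blast
    then show "x \<in> ?B" "y \<in> ?B"
      using x y eq by simp_all
  qed
  ultimately have "same_block P x y"
    unfolding same_block_def by blast
  with P(2) show False ..
qed

lemma reduction_card_le:
  assumes D: "separating D" and D': "separating D'" and red: "reduction D D' \<phi> \<alpha>"
    and P: "P \<in> parts D"
  shows "card P \<le> card (\<alpha> P)"
proof -
  let ?R = "pcomp (states D) (\<alpha> P) \<phi>"
  have \<phi>: "\<phi> ` states D \<subseteq> states D'" and Q: "partition_on (states D') (\<alpha> P)"
    and ref: "Defs.refines ?R P"
    using red P separatingD(3)[OF D'] unfolding reduction_def by blast+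
  have R: "partition_on (states D) ?R"
    by (rule partition_on_pcomp[OF Q \<phi>])
  have "card P \<le> card ?R"
    using card_le_if_refines[OF R separatingD(3)[OF D P] ref]
      finite_elements[OF separatingD(1)[OF D] R] .
  also have "\<dots> \<le> card (\<alpha> P)"
    by (rule card_pcomp_le[OF Q \<phi> separatingD(1)[OF D']])
  finally show ?thesis .
qed

lemma card_le_max_rank:
  assumes "separating D" "P \<in> parts D"
  shows "card P \<le> max_rank D"
  unfolding max_rank_def using separating_finite_parts[OF assms(1)] assms(2) by simp

lemma dev_le_card_le:
  assumes D: "separating D" and D': "separating D'" and le: "dev_le D D'"
  shows "card (states D) \<le> card (states D')" "max_rank D \<le> max_rank D'"
proof -
  obtain \<phi> \<alpha> where red: "reduction D D' \<phi> \<alpha>"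
    using le unfolding dev_le_iff_reduction by blast
  then have "\<phi> ` states D \<subseteq> states D'"
    unfolding reduction_def by blast
  with reduction_inj_on[OF D D' red] show "card (states D) \<le> card (states D')"
    using card_inj_on_le separatingD(1)[OF D'] by blast
  have "card P \<le> max_rank D'" if P: "P \<in> parts D" for P
    using reduction_card_le[OF D D' red P] card_le_max_rank[OF D'] red P
    unfolding reduction_def by fastforce
  then show "max_rank D \<le> max_rank D'"
    unfolding max_rank_def using separating_finite_parts[OF D] separatingD(2)[OF D] by simp
qed

lemma reduction_max_parts:
  assumes D: "separating D" and D': "separating D'" and red: "reduction D D' \<phi> \<alpha>"
    and card_states: "card (states D') \<le> card (states D)" and rank: "max_rank D' \<le> max_rank D"
  shows "bij_betw \<phi> (states D) (states D')"
    "\<And>P. P \<in> max_parts D \<Longrightarrow> \<alpha> P \<in> max_parts D' \<and> P = pullback (states D) \<phi> (\<alpha> P)"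
proof -
  have \<phi>: "\<phi> ` states D \<subseteq> states D'" and inj: "inj_on \<phi> (states D)"
    using red reduction_inj_on[OF D D' red] unfolding reduction_def by blast+
  have "\<phi> ` states D = states D'"
    using card_subset_eq[OF separatingD(1)[OF D'] \<phi>] card_image[OF inj] card_states
      card_mono[OF separatingD(1)[OF D'] \<phi>] by linarith
  with inj show bij: "bij_betw \<phi> (states D) (states D')"
    unfolding bij_betw_def by blast
  show "\<alpha> P \<in> max_parts D' \<and> P = pullback (states D) \<phi> (\<alpha> P)" if "P \<in> max_parts D" for P
  proof -
    have P: "P \<in> parts D" "card P = max_rank D"
      using that unfolding max_parts_def by auto
    let ?R = "pcomp (states D) (\<alpha> P) \<phi>"
    have Q: "partition_on (states D') (\<alpha> P)" and \<alpha>P: "\<alpha> P \<in> parts D'"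
      and ref: "Defs.refines ?R P"
      using red P separatingD(3)[OF D'] unfolding reduction_def by blast+
    have R: "?R = pullback (states D) \<phi> (\<alpha> P)"
      by (rule pcomp_bij[OF Q bij])
    have "card ?R = card (\<alpha> P)"
      unfolding R using card_pullback[OF bij] partition_on_blockD(2)[OF Q] by blast
    moreover have "card (\<alpha> P) \<le> max_rank D'"
      by (rule card_le_max_rank[OF D' \<alpha>P])
    moreover have "card P \<le> card (\<alpha> P)"
      by (rule reduction_card_le[OF D D' red P(1)])
    ultimately have "card ?R = card P" "card (\<alpha> P) = max_rank D'"
      using P(2) rank by linarith+
    moreover have "?R = P"
      using refines_eq_if_card_le[OF partition_on_pcomp[OF Q \<phi>] separatingD(3)[OF D P(1)] ref]
        finite_elements[OF separatingD(1)[OF D] partition_on_pcomp[OF Q \<phi>]] calculation(1) by simp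
    ultimately show ?thesis
      using \<alpha>P R unfolding max_parts_def by simp
  qed
qed

lemma finite_max_parts: "separating D \<Longrightarrow> finite (max_parts D)"
  unfolding max_parts_def by (auto dest: separating_finite_parts)

lemma dev_equiv_max_parts_iso:
  assumes D: "separating D" and D': "separating D'" and eq: "dev_equiv D D'"
  shows "max_rank D = max_rank D'"
    and "\<exists>\<alpha>. bij_betw \<alpha> (max_parts D) (max_parts D') \<and>
           (\<forall>P\<in>max_parts D. \<forall>Q\<in>max_parts D. adjacent (\<alpha> P) (\<alpha> Q) \<longleftrightarrow> adjacent P Q)"
proof -
  have le: "dev_le D D'" and ge: "dev_le D' D"
    using eq unfolding dev_equiv_def by auto
  obtain \<phi> \<alpha> where red: "reduction D D' \<phi> \<alpha>"
    using le unfolding dev_le_iff_reduction by blast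
  obtain \<psi> \<beta> where red': "reduction D' D \<psi> \<beta>"
    using ge unfolding dev_le_iff_reduction by blast
  note card_le = dev_le_card_le[OF D D' le] dev_le_card_le[OF D' D ge]
  then show "max_rank D = max_rank D'"
    by simp
  note \<alpha> = reduction_max_parts[OF D D' red card_le(3,4)]
  note \<beta> = reduction_max_parts[OF D' D red' card_le(1,2)]
  have inj_\<alpha>: "inj_on \<alpha> (max_parts D)" and \<alpha>_into: "\<alpha> ` max_parts D \<subseteq> max_parts D'"
    using \<alpha>(2) by (metis inj_onI, blast)
  have "inj_on \<beta> (max_parts D')" "\<beta> ` max_parts D' \<subseteq> max_parts D"
    using \<beta>(2) by (metis inj_onI, blast)
  then have "card (max_parts D) = card (max_parts D')"
    using card_bij_eq[OF inj_\<alpha> \<alpha>_into] finite_max_parts[OF D] finite_max_parts[OF D'] by blast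
  then have "bij_betw \<alpha> (max_parts D) (max_parts D')"
    using \<alpha>_into inj_\<alpha> finite_max_parts[OF D']
    by (simp add: bij_betw_def card_image card_subset_eq)
  moreover have "adjacent (\<alpha> P) (\<alpha> Q) \<longleftrightarrow> adjacent P Q" if "P \<in> max_parts D" "Q \<in> max_parts D" for P Q
  proof -
    have "R \<subseteq> Pow (states D')" if "R \<in> max_parts D'" for R
      using partition_on_blockD(2)[OF separatingD(3)[OF D']] that unfolding max_parts_def by blast
    then show ?thesis
      using adjacent_pullback[OF \<alpha>(1)] \<alpha>(2) that by metis
  qed
  ultimately show "\<exists>\<alpha>. bij_betw \<alpha> (max_parts D) (max_parts D') \<and>
           (\<forall>P\<in>max_parts D. \<forall>Q\<in>max_parts D. adjacent (\<alpha> P) (\<alpha> Q) \<longleftrightarrow> adjacent P Q)"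
    by blast
qed

section \<open>Neighbour profiles of Hamming graphs\<close>

definition neighbour_profile :: "'v set \<Rightarrow> ('v \<Rightarrow> 'v \<Rightarrow> bool) \<Rightarrow> 'v \<Rightarrow> nat \<Rightarrow> nat" where
  "neighbour_profile V E v s = card {u \<in> V. E v u \<and> card {w \<in> V. E v w \<and> E u w} = s}"

lemma neighbour_profile_iso:
  assumes bij: "bij_betw f V V'" and E: "\<And>u w. u \<in> V \<Longrightarrow> w \<in> V \<Longrightarrow> E' (f u) (f w) \<longleftrightarrow> E u w"
    and v: "v \<in> V"
  shows "neighbour_profile V' E' (f v) s = neighbour_profile V E v s"
proof -
  have inj: "inj_on f V" and V': "V' = f ` V"
    using bij unfolding bij_betw_def by auto
  have card_sub: "card {w \<in> V'. Q w} = card {w \<in> V. Q (f w)}" for Q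
  proof -
    have "{w \<in> V'. Q w} = f ` {w \<in> V. Q (f w)}"
      unfolding V' by blast
    then show ?thesis
      using card_image[OF inj_on_subset[OF inj]] by (metis (no_types, lifting) mem_Collect_eq subsetI)
  qed
  have "card {w \<in> V'. E' (f v) w \<and> E' (f u) w} = card {w \<in> V. E v w \<and> E u w}" if "u \<in> V" for u
    unfolding card_sub using E v that by (intro arg_cong[where f=card]) auto
  then show ?thesis
    unfolding neighbour_profile_def card_sub using E v by (intro arg_cong[where f=card]) auto
qed

definition hamming_dist :: "'i set \<Rightarrow> ('i \<Rightarrow> 'a) \<Rightarrow> ('i \<Rightarrow> 'a) \<Rightarrow> nat" where
  "hamming_dist I A B = card {i \<in> I. A i \<noteq> B i}"

lemma hamming_dist_eq_0:
  assumes "finite I" "A \<in> PiE I T" "B \<in> PiE I T"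
  shows "hamming_dist I A B = 0 \<longleftrightarrow> A = B"
proof
  assume "hamming_dist I A B = 0"
  then have "\<forall>i\<in>I. A i = B i"
    using assms(1) unfolding hamming_dist_def by simp
  then show "A = B"
    using assms(2,3) by (intro PiE_ext) auto
qed (simp add: hamming_dist_def)

definition coord_update :: "('i \<Rightarrow> 'a) \<Rightarrow> 'i \<times> 'a \<Rightarrow> 'i \<Rightarrow> 'a" where
  "coord_update A p = A(fst p := snd p)"

context
  fixes I :: "'i set" and T :: "'i \<Rightarrow> 'a set" and A0 :: "'i \<Rightarrow> 'a"
  assumes A0: "A0 \<in> PiE I T"
begin

definition coord_moves :: "('i \<times> 'a) set" where
  "coord_moves = Sigma I (\<lambda>i. T i - {A0 i})"

lemma coord_update_PiE: "p \<in> coord_moves \<Longrightarrow> coord_update A0 p \<in> PiE I T"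
  using A0 unfolding coord_moves_def coord_update_def by (auto simp: PiE_iff extensional_def)

lemma coord_update_diff:
  assumes "p \<in> coord_moves" "q \<in> coord_moves"
  shows "{i \<in> I. coord_update A0 p i \<noteq> coord_update A0 q i} =
      (if fst p = fst q then (if snd p = snd q then {} else {fst p}) else {fst p, fst q})"
  using assms unfolding coord_moves_def coord_update_def by auto

lemma hamming_dist_coord_update:
  assumes "p \<in> coord_moves" "q \<in> coord_moves"
  shows "hamming_dist I (coord_update A0 p) (coord_update A0 q) = 1 \<longleftrightarrow> fst p = fst q \<and> snd p \<noteq> snd q"
  unfolding hamming_dist_def coord_update_diff[OF assms] by auto

lemma inj_on_coord_update: "inj_on (coord_update A0) coord_moves"
proof (rule inj_onI)
  fix p q assume "p \<in> coord_moves" "q \<in> coord_moves" "coord_update A0 p = coord_update A0 q"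
  then show "p = q"
    using coord_update_diff[of p q] by (auto split: if_splits simp: prod_eq_iff)
qed

lemma hamming_neighbours: "{B \<in> PiE I T. hamming_dist I A0 B = 1} = coord_update A0 ` coord_moves"
proof
  show "{B \<in> PiE I T. hamming_dist I A0 B = 1} \<subseteq> coord_update A0 ` coord_moves"
  proof
    fix B assume "B \<in> {B \<in> PiE I T. hamming_dist I A0 B = 1}"
    then have B: "B \<in> PiE I T" and "card {i \<in> I. A0 i \<noteq> B i} = 1"
      unfolding hamming_dist_def by auto
    then obtain i where i: "{i \<in> I. A0 i \<noteq> B i} = {i}"
      by (auto simp: card_1_singleton_iff)
    then have "i \<in> {i \<in> I. A0 i \<noteq> B i}"
      by simp
    then have p: "(i, B i) \<in> coord_moves"
      using B unfolding coord_moves_def by auto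
    have "B l = coord_update A0 (i, B i) l" if "l \<in> I" for l
    proof (cases "l = i")
      case False
      then have "l \<notin> {i \<in> I. A0 i \<noteq> B i}"
        using i by blast
      with that False show ?thesis
        unfolding coord_update_def by auto
    qed (simp add: coord_update_def)
    then have "B = coord_update A0 (i, B i)"
      using PiE_ext[OF B coord_update_PiE[OF p]] by blast
    with p show "B \<in> coord_update A0 ` coord_moves"
      by blast
  qed
  show "coord_update A0 ` coord_moves \<subseteq> {B \<in> PiE I T. hamming_dist I A0 B = 1}"
  proof (rule image_subsetI)
    fix p assume p: "p \<in> coord_moves"
    then have "{i \<in> I. A0 i \<noteq> coord_update A0 p i} = {fst p}"
      unfolding coord_moves_def coord_update_def by auto
    with coord_update_PiE[OF p] show "coord_update A0 p \<in> {B \<in> PiE I T. hamming_dist I A0 B = 1}"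
      unfolding hamming_dist_def by simp
  qed
qed

lemma card_common_hamming_neighbours:
  assumes p: "p \<in> coord_moves" and T: "finite (T (fst p))"
  shows "card {C \<in> PiE I T. hamming_dist I A0 C = 1 \<and> hamming_dist I (coord_update A0 p) C = 1}
       = card (T (fst p)) - 2"
proof -
  let ?i = "fst p"
  have "{C \<in> PiE I T. hamming_dist I A0 C = 1 \<and> hamming_dist I (coord_update A0 p) C = 1}
      = {C \<in> {B \<in> PiE I T. hamming_dist I A0 B = 1}. hamming_dist I (coord_update A0 p) C = 1}"
    by blast
  also have "\<dots> = coord_update A0 ` {q \<in> coord_moves. hamming_dist I (coord_update A0 p) (coord_update A0 q) = 1}"
    unfolding hamming_neighbours by blast
  also have "{q \<in> coord_moves. hamming_dist I (coord_update A0 p) (coord_update A0 q) = 1}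
      = Pair ?i ` (T ?i - {A0 ?i, snd p})"
    using hamming_dist_coord_update[OF p] p unfolding coord_moves_def by auto
  finally have "card {C \<in> PiE I T. hamming_dist I A0 C = 1 \<and> hamming_dist I (coord_update A0 p) C = 1}
      = card (coord_update A0 ` Pair ?i ` (T ?i - {A0 ?i, snd p}))"
    by simp
  also have "\<dots> = card (Pair ?i ` (T ?i - {A0 ?i, snd p}))"
    using p by (intro card_image inj_on_subset[OF inj_on_coord_update]) (auto simp: coord_moves_def)
  also have "\<dots> = card (T ?i - {A0 ?i, snd p})"
    by (rule card_image) (simp add: inj_on_def)
  also have "\<dots> = card (T ?i) - card {A0 ?i, snd p}"
    using p A0 T unfolding coord_moves_def by (intro card_Diff_subset) (auto simp: PiE_iff)
  also have "card {A0 ?i, snd p} = 2"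
    using p unfolding coord_moves_def by (cases p) auto
  finally show ?thesis .
qed

lemma neighbour_profile_hamming:
  assumes I: "finite I" and T: "\<And>i. i \<in> I \<Longrightarrow> finite (T i)"
  shows "neighbour_profile (PiE I T) (\<lambda>A B. hamming_dist I A B = 1) A0 s
       = (\<Sum>i | i \<in> I \<and> card (T i) - 2 = s. card (T i) - 1)"
proof -
  let ?W = "\<lambda>u. card {w \<in> PiE I T. hamming_dist I A0 w = 1 \<and> hamming_dist I u w = 1}"
  let ?M = "{p \<in> coord_moves. card (T (fst p)) - 2 = s}"
  have "neighbour_profile (PiE I T) (\<lambda>A B. hamming_dist I A B = 1) A0 s
      = card {u \<in> {B \<in> PiE I T. hamming_dist I A0 B = 1}. ?W u = s}"
    unfolding neighbour_profile_def by (intro arg_cong[where f=card]) blast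
  also have "{u \<in> {B \<in> PiE I T. hamming_dist I A0 B = 1}. ?W u = s}
      = coord_update A0 ` {p \<in> coord_moves. ?W (coord_update A0 p) = s}"
    unfolding hamming_neighbours by blast
  also have "{p \<in> coord_moves. ?W (coord_update A0 p) = s} = ?M"
    using card_common_hamming_neighbours T unfolding coord_moves_def by auto
  also have "card (coord_update A0 ` ?M) = card ?M"
    by (intro card_image inj_on_subset[OF inj_on_coord_update]) blast
  also have "?M = Sigma {i. i \<in> I \<and> card (T i) - 2 = s} (\<lambda>i. T i - {A0 i})"
    unfolding coord_moves_def by auto
  also have "card \<dots> = (\<Sum>i | i \<in> I \<and> card (T i) - 2 = s. card (T i - {A0 i}))"
    using I T by (intro card_SigmaI) auto
  also have "\<dots> = (\<Sum>i | i \<in> I \<and> card (T i) - 2 = s. card (T i) - 1)"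
    using A0 T by (intro sum.cong refl) (auto simp: PiE_iff)
  finally show ?thesis .
qed

end

section \<open>Products of devices\<close>

definition tuples :: "nat \<Rightarrow> (nat \<Rightarrow> 'a set) \<Rightarrow> 'a list set" where
  "tuples m X = {xs. length xs = m \<and> (\<forall>i<m. xs ! i \<in> X i)}"

definition tuple_map :: "nat \<Rightarrow> (nat \<Rightarrow> 'a \<Rightarrow> 'b) \<Rightarrow> 'a list \<Rightarrow> nat \<Rightarrow> 'b" where
  "tuple_map m h xs = restrict (\<lambda>i. h i (xs ! i)) {..<m}"

lemma states_prod_dev: "states (prod_dev Ds) = tuples (length Ds) (\<lambda>i. states (Ds ! i))"
  unfolding prod_dev_def states_def tuples_def by simp

lemma parts_prod_dev:
  "parts (prod_dev Ds) = {block_prod Ps | Ps. length Ps = length Ds \<and> (\<forall>i<length Ds. Ps ! i \<in> parts (Ds ! i))}"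
  unfolding prod_dev_def parts_def by simp

lemma finite_tuples:
  assumes "\<And>i. i < m \<Longrightarrow> finite (X i)"
  shows "finite (tuples m X)"
proof (rule finite_subset)
  show "tuples m X \<subseteq> {xs. set xs \<subseteq> (\<Union>i<m. X i) \<and> length xs = m}"
    unfolding tuples_def by (fastforce simp: in_set_conv_nth)
  show "finite {xs. set xs \<subseteq> (\<Union>i<m. X i) \<and> length xs = m}"
    using assms by (intro finite_lists_length_eq) blast
qed

lemma tuple_map_eq_iff: "tuple_map m h xs = tuple_map m h ys \<longleftrightarrow> (\<forall>i<m. h i (xs ! i) = h i (ys ! i))"
  unfolding tuple_map_def restrict_def fun_eq_iff by auto

lemma tuple_map_image: "tuple_map m h ` tuples m X = PiE {..<m} (\<lambda>i. h i ` X i)"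
proof
  show "tuple_map m h ` tuples m X \<subseteq> PiE {..<m} (\<lambda>i. h i ` X i)"
  proof (rule image_subsetI)
    fix xs assume "xs \<in> tuples m X"
    then show "tuple_map m h xs \<in> PiE {..<m} (\<lambda>i. h i ` X i)"
      unfolding tuple_map_def restrict_PiE_iff tuples_def by auto
  qed
  show "PiE {..<m} (\<lambda>i. h i ` X i) \<subseteq> tuple_map m h ` tuples m X"
  proof
    fix F assume F: "F \<in> PiE {..<m} (\<lambda>i. h i ` X i)"
    have "\<forall>i\<in>{..<m}. \<exists>y. y \<in> X i \<and> h i y = F i"
      using F by (force simp: PiE_iff)
    then obtain y where y: "\<And>i. i < m \<Longrightarrow> y i \<in> X i \<and> h i (y i) = F i"
      by (metis lessThan_iff)
    have "tuple_map m h (map y [0..<m]) = F"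
      using y PiE_arb[OF F] unfolding tuple_map_def by (auto simp: fun_eq_iff)
    moreover have "map y [0..<m] \<in> tuples m X"
      using y unfolding tuples_def by simp
    ultimately show "F \<in> tuple_map m h ` tuples m X"
      by blast
  qed
qed

lemma block_prod_kernels:
  assumes len: "length Ps = m" and K: "\<And>i. i < m \<Longrightarrow> Ps ! i = kernel (X i) (h i)"
  shows "block_prod Ps = kernel (tuples m X) (tuple_map m h)"
proof (rule set_eqI, rule iffI)
  fix Y assume "Y \<in> block_prod Ps"
  then obtain Bs where Bs: "length Bs = m" "\<forall>i<m. Bs ! i \<in> Ps ! i"
    and Y: "Y = {xs. length xs = m \<and> (\<forall>i<m. xs ! i \<in> Bs ! i)}"
    unfolding block_prod_def using len by auto
  have "\<forall>i<m. \<exists>z. z \<in> X i \<and> Bs ! i = {y \<in> X i. h i y = h i z}"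
    using Bs(2) K unfolding kernel_conv by blast
  then obtain z where z: "\<And>i. i < m \<Longrightarrow> z i \<in> X i \<and> Bs ! i = {y \<in> X i. h i y = h i (z i)}"
    by metis
  have "map z [0..<m] \<in> tuples m X"
    using z unfolding tuples_def by simp
  moreover have "Y = {xs \<in> tuples m X. tuple_map m h xs = tuple_map m h (map z [0..<m])}"
    unfolding Y tuples_def tuple_map_eq_iff using z by auto
  ultimately show "Y \<in> kernel (tuples m X) (tuple_map m h)"
    unfolding kernel_conv by blast
next
  fix Y assume "Y \<in> kernel (tuples m X) (tuple_map m h)"
  then obtain zs where zs: "zs \<in> tuples m X"
    and Y: "Y = {xs \<in> tuples m X. tuple_map m h xs = tuple_map m h zs}"
    unfolding kernel_conv by blast
  let ?Bs = "map (\<lambda>i. {y \<in> X i. h i y = h i (zs ! i)}) [0..<m]"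
  have "\<forall>i<m. ?Bs ! i \<in> Ps ! i"
    using zs K unfolding tuples_def kernel_conv by auto
  moreover have "Y = {xs. length xs = m \<and> (\<forall>i<m. xs ! i \<in> ?Bs ! i)}"
    unfolding Y tuples_def tuple_map_eq_iff by auto
  ultimately show "Y \<in> block_prod Ps"
    unfolding block_prod_def using len by (intro CollectI exI[of _ ?Bs]) simp
qed

lemma card_kernel_tuple_map:
  assumes "\<And>i. i < m \<Longrightarrow> finite (X i)"
  shows "card (kernel (tuples m X) (tuple_map m h)) = (\<Prod>i<m. card (h i ` X i))"
proof -
  have "card (kernel (tuples m X) (tuple_map m h)) = card (tuple_map m h ` tuples m X)"
    using finite_tuples[OF assms] by (rule card_kernel)
  also have "\<dots> = (\<Prod>i<m. card (h i ` X i))"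
    unfolding tuple_map_image by (simp add: card_PiE)
  finally show ?thesis .
qed

lemma partition_meet_kernel_tuple_map:
  "partition_meet (kernel T (tuple_map m g)) (kernel T (tuple_map m h))
     = kernel T (tuple_map m (\<lambda>i y. (g i y, h i y)))"
  unfolding partition_meet_kernel by (rule kernel_cong_fibres) (auto simp: tuple_map_eq_iff)

section \<open>Linear functionals on F_2^n\<close>

fun bdot :: "bool list \<Rightarrow> bool list \<Rightarrow> bool" where
  "bdot (a # as) (x # xs) = ((a \<and> x) \<noteq> bdot as xs)"
| "bdot _ _ = False"

definition unit_vec :: "nat \<Rightarrow> nat \<Rightarrow> bool list" where
  "unit_vec n j = (replicate n False)[j := True]"

definition nonzero_vecs :: "nat \<Rightarrow> bool list set" where
  "nonzero_vecs n = {a \<in> bvec n. True \<in> set a}"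

lemma nth_neq_if_neq:
  assumes "length xs = n" "length ys = n" "xs \<noteq> ys"
  shows "\<exists>i<n. xs ! i \<noteq> ys ! i"
  using assms nth_equalityI by metis

lemma bdot_commute: "bdot a x = bdot x a"
  by (induction a x rule: bdot.induct) (auto elim: bdot.elims)

lemma bdot_replicate_False: "bdot a (replicate n False) = False"
proof (induction a arbitrary: n)
  case (Cons b as)
  then show ?case by (cases n) auto
qed simp

lemma bdot_xor:
  "length x = length a \<Longrightarrow> length y = length a \<Longrightarrow> bdot a (map2 (\<noteq>) x y) = (bdot a x \<noteq> bdot a y)"
proof (induction a arbitrary: x y)
  case (Cons b as)
  then obtain x0 xs y0 ys where "x = x0 # xs" "y = y0 # ys"
    by (metis length_Suc_conv)
  with Cons show ?case by auto
qed simp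

lemma f2_linear_bdot: "length a = n \<Longrightarrow> f2_linear n (bdot a)"
  unfolding f2_linear_def bvec_def using bdot_xor by auto

lemma bdot_unit_vec: "j < length a \<Longrightarrow> bdot a (unit_vec (length a) j) = a ! j"
proof (induction a arbitrary: j)
  case (Cons b as)
  then show ?case
    by (cases j) (auto simp: unit_vec_def bdot_replicate_False)
qed simp

lemma unit_vec_bvec: "unit_vec n j \<in> bvec n"
  unfolding unit_vec_def bvec_def by simp

lemma replicate_False_bvec: "replicate n False \<in> bvec n"
  unfolding bvec_def by simp

lemma bvec_eq_replicate_False: "a \<in> bvec n \<Longrightarrow> True \<notin> set a \<Longrightarrow> a = replicate n False"
  unfolding bvec_def by (auto intro: nth_equalityI simp: in_set_conv_nth)

lemma f2_linear_replicate_False: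
  assumes "f2_linear n f"
  shows "f (replicate n False) = False"
proof -
  have "map2 (\<noteq>) (replicate n False) (replicate n False) = replicate n False"
    by (induction n) auto
  then show ?thesis
    using assms replicate_False_bvec unfolding f2_linear_def by metis
qed

(* Induction on the number of ones: clearing a set bit is adding a unit vector. *)
lemma f2_linear_eqI:
  assumes f: "f2_linear n f" and g: "f2_linear n g"
    and units: "\<And>j. j < n \<Longrightarrow> f (unit_vec n j) = g (unit_vec n j)" and x: "x \<in> bvec n"
  shows "f x = g x"
proof -
  have "\<forall>x\<in>bvec n. card {j. j < n \<and> x ! j} = c \<longrightarrow> f x = g x" for c
  proof (induction c)
    case 0
    show ?case
    proof (intro ballI impI)
      fix x assume x: "x \<in> bvec n" and "card {j. j < n \<and> x ! j} = 0"
      then have "x = replicate n False"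
        by (intro bvec_eq_replicate_False) (auto simp: bvec_def in_set_conv_nth)
      then show "f x = g x"
        using f2_linear_replicate_False[OF f] f2_linear_replicate_False[OF g] by simp
    qed
  next
    case (Suc c)
    show ?case
    proof (intro ballI impI)
      fix x assume x: "x \<in> bvec n" and c: "card {j. j < n \<and> x ! j} = Suc c"
      then obtain j where j: "j < n" "x ! j"
        by (metis (mono_tags, lifting) card.empty empty_Collect_eq nat.distinct(1))
      let ?x' = "x[j := False]"
      have lx: "length x = n"
        using x unfolding bvec_def by simp
      have x': "?x' \<in> bvec n"
        using lx unfolding bvec_def by simp
      have "{i. i < n \<and> ?x' ! i} = {i. i < n \<and> x ! i} - {j}"
        using lx j by (auto simp: nth_list_update)
      then have "card {i. i < n \<and> ?x' ! i} = c"
        using c j by simp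
      then have IH: "f ?x' = g ?x'"
        using Suc.IH x' by blast
      have x_eq: "x = map2 (\<noteq>) ?x' (unit_vec n j)"
        using lx j by (intro nth_equalityI) (auto simp: unit_vec_def nth_list_update)
      have "f x = (f ?x' \<noteq> f (unit_vec n j))" "g x = (g ?x' \<noteq> g (unit_vec n j))"
        using f g x' unit_vec_bvec[of n j] x_eq unfolding f2_linear_def by metis+
      then show "f x = g x"
        using IH units[OF j(1)] by simp
    qed
  qed
  then show ?thesis
    using x by blast
qed

lemma f2_linear_eq_bdot:
  assumes f: "f2_linear n f" and x: "x \<in> bvec n"
  shows "f x = bdot (map (\<lambda>j. f (unit_vec n j)) [0..<n]) x"
proof (rule f2_linear_eqI[OF f f2_linear_bdot _ x])
  let ?a = "map (\<lambda>j. f (unit_vec n j)) [0..<n]"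
  show "length ?a = n"
    by simp
  fix j assume "j < n"
  then show "f (unit_vec n j) = bdot ?a (unit_vec n j)"
    using bdot_unit_vec[of j ?a] by simp
qed

lemma finite_bvec: "finite (bvec n)"
  and card_bvec: "card (bvec n) = 2 ^ n"
proof -
  have eq: "bvec n = {xs. set xs \<subseteq> (UNIV :: bool set) \<and> length xs = n}"
    unfolding bvec_def by simp
  show "finite (bvec n)"
    unfolding eq by (rule finite_lists_length_eq) simp
  show "card (bvec n) = 2 ^ n"
    unfolding eq using card_lists_length_eq[of "UNIV :: bool set" n] by simp
qed

lemma card_nonzero_vecs: "card (nonzero_vecs n) = 2 ^ n - 1"
proof -
  have "nonzero_vecs n = bvec n - {replicate n False}"
  proof
    show "nonzero_vecs n \<subseteq> bvec n - {replicate n False}"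
      unfolding nonzero_vecs_def by auto
    show "bvec n - {replicate n False} \<subseteq> nonzero_vecs n"
      unfolding nonzero_vecs_def using bvec_eq_replicate_False by blast
  qed
  then show ?thesis
    using card_bvec finite_bvec replicate_False_bvec by (simp add: card_Diff_singleton)
qed

lemma card_bdot_image:
  assumes a: "a \<in> bvec n"
  shows "card (bdot a ` bvec n) = (if True \<in> set a then 2 else 1)"
proof (cases "True \<in> set a")
  case True
  then obtain j where j: "j < length a" "a ! j"
    by (auto simp: in_set_conv_nth)
  have len: "length a = n"
    using a unfolding bvec_def by simp
  have "True \<in> bdot a ` bvec n"
    using bdot_unit_vec[OF j(1)] j(2) len by (intro image_eqI[OF _ unit_vec_bvec]) simp
  moreover have "False \<in> bdot a ` bvec n"
    by (intro image_eqI[OF _ replicate_False_bvec]) (simp add: bdot_replicate_False)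
  ultimately have "bdot a ` bvec n = UNIV"
    using UNIV_bool by blast
  with True show ?thesis
    by simp
next
  case False
  then have "a = replicate n False"
    by (rule bvec_eq_replicate_False[OF a])
  then have "bdot a ` bvec n = {False}"
    using replicate_False_bvec bdot_commute bdot_replicate_False by auto
  with False show ?thesis
    by simp
qed

lemma bool_pair_subgroup_eq_UNIV:
  assumes xor: "\<And>p q. p \<in> S \<Longrightarrow> q \<in> S \<Longrightarrow> (fst p \<noteq> fst q, snd p \<noteq> snd q) \<in> S"
    and p1: "(True, b1) \<in> S" and p2: "(a2, True) \<in> S" and p3: "(a3, b3) \<in> S" and "a3 \<noteq> b3"
  shows "S = UNIV"
proof -
  have ff: "(False, False) \<in> S"
    using xor[OF p1 p1] by simp
  have tf_ft: "(True, False) \<in> S \<and> (False, True) \<in> S"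
    using xor[OF p1 p3] xor[OF p2 p3] p1 p2 p3 \<open>a3 \<noteq> b3\<close> by (cases a3; cases b1; cases a2) auto
  then have "(True, True) \<in> S"
    using xor[of "(True, False)" "(False, True)"] by simp
  with ff tf_ft have "(x, y) \<in> S" for x y
    by (cases x; cases y) auto
  then show ?thesis
    by auto
qed

lemma bdot_pair_surj:
  assumes a: "a \<in> nonzero_vecs n" and b: "b \<in> nonzero_vecs n" and "a \<noteq> b"
  shows "(\<lambda>y. (bdot a y, bdot b y)) ` bvec n = UNIV"
proof -
  let ?I = "(\<lambda>y. (bdot a y, bdot b y)) ` bvec n"
  have len: "length a = n" "length b = n"
    using a b unfolding nonzero_vecs_def bvec_def by auto
  have xor: "(fst p \<noteq> fst q, snd p \<noteq> snd q) \<in> ?I" if p: "p \<in> ?I" and q: "q \<in> ?I" for p q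
  proof -
    obtain y z where yz: "y \<in> bvec n" "z \<in> bvec n" "p = (bdot a y, bdot b y)" "q = (bdot a z, bdot b z)"
      using p q by blast
    then have "map2 (\<noteq>) y z \<in> bvec n"
      unfolding bvec_def by simp
    moreover have "(fst p \<noteq> fst q, snd p \<noteq> snd q) = (bdot a (map2 (\<noteq>) y z), bdot b (map2 (\<noteq>) y z))"
      using yz len bdot_xor unfolding bvec_def by simp
    ultimately show ?thesis
      by blast
  qed
  have unit: "(a ! j, b ! j) \<in> ?I" if "j < n" for j
  proof -
    have "bdot a (unit_vec n j) = a ! j" "bdot b (unit_vec n j) = b ! j"
      using bdot_unit_vec[of j a] bdot_unit_vec[of j b] len that by simp_all
    then show ?thesis
      by (intro image_eqI[where x="unit_vec n j"]) (simp_all add: unit_vec_bvec)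
  qed
  obtain j1 where j1: "j1 < n" "a ! j1"
    using a len unfolding nonzero_vecs_def by (auto simp: in_set_conv_nth)
  obtain j2 where j2: "j2 < n" "b ! j2"
    using b len unfolding nonzero_vecs_def by (auto simp: in_set_conv_nth)
  obtain j3 where j3: "j3 < n" "a ! j3 \<noteq> b ! j3"
    using nth_neq_if_neq[OF len \<open>a \<noteq> b\<close>] by blast
  from unit[OF j1(1)] unit[OF j2(1)] unit[OF j3(1)] j1(2) j2(2) show ?thesis
    by (intro bool_pair_subgroup_eq_UNIV[OF xor _ _ _ j3(2)]) simp_all
qed

section \<open>Products of binary linear devices\<close>

abbreviation lin_prod :: "nat list \<Rightarrow> bool list list asd" where
  "lin_prod ks \<equiv> prod_dev (map lin_dev ks)"

definition coeffs :: "nat list \<Rightarrow> (nat \<Rightarrow> bool list) set" where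
  "coeffs ks = PiE {..<length ks} (\<lambda>i. bvec (ks ! i))"

definition full_coeffs :: "nat list \<Rightarrow> (nat \<Rightarrow> bool list) set" where
  "full_coeffs ks = PiE {..<length ks} (\<lambda>i. nonzero_vecs (ks ! i))"

definition lin_part :: "nat list \<Rightarrow> (nat \<Rightarrow> bool list) \<Rightarrow> bool list list set set" where
  "lin_part ks A =
     kernel (tuples (length ks) (\<lambda>i. bvec (ks ! i))) (tuple_map (length ks) (\<lambda>i. bdot (A i)))"

lemma states_lin_prod: "states (lin_prod ks) = tuples (length ks) (\<lambda>i. bvec (ks ! i))"
  unfolding states_prod_dev tuples_def by (simp add: lin_dev_def states_def)

lemma finite_states_lin_prod: "finite (states (lin_prod ks))"
  unfolding states_lin_prod using finite_bvec by (rule finite_tuples)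

lemma full_coeffs_subset: "full_coeffs ks \<subseteq> coeffs ks"
  unfolding full_coeffs_def coeffs_def nonzero_vecs_def by (auto simp: PiE_iff)

lemma parts_lin_prod: "parts (lin_prod ks) = lin_part ks ` coeffs ks"
proof
  let ?m = "length ks"
  show "parts (lin_prod ks) \<subseteq> lin_part ks ` coeffs ks"
  proof
    fix P assume "P \<in> parts (lin_prod ks)"
    then obtain Ps where len: "length Ps = ?m" and P: "P = block_prod Ps"
      and parts: "\<forall>i<?m. Ps ! i \<in> parts (lin_dev (ks ! i))"
      unfolding parts_prod_dev by auto
    then have "\<forall>i<?m. \<exists>f. f2_linear (ks ! i) f \<and> Ps ! i = kernel (bvec (ks ! i)) f"
      by (auto simp: lin_dev_def parts_def)
    then obtain f where f: "\<And>i. i < ?m \<Longrightarrow> f2_linear (ks ! i) (f i) \<and> Ps ! i = kernel (bvec (ks ! i)) (f i)"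
      by metis
    define A where "A = restrict (\<lambda>i. map (\<lambda>j. f i (unit_vec (ks ! i) j)) [0..<ks ! i]) {..<?m}"
    have A: "A \<in> coeffs ks"
      unfolding A_def coeffs_def bvec_def by (simp add: restrict_PiE_iff)
    have "Ps ! i = kernel (bvec (ks ! i)) (bdot (A i))" if i: "i < ?m" for i
    proof -
      have "f i x = bdot (A i) x" if "x \<in> bvec (ks ! i)" for x
        using f2_linear_eq_bdot[OF conjunct1[OF f[OF i]] that] i unfolding A_def by simp
      then have "kernel (bvec (ks ! i)) (f i) = kernel (bvec (ks ! i)) (bdot (A i))"
        by (intro kernel_cong_fibres) simp
      with f[OF i] show ?thesis
        by simp
    qed
    then have "P = lin_part ks A"
      unfolding P lin_part_def by (rule block_prod_kernels[OF len])
    with A show "P \<in> lin_part ks ` coeffs ks"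
      by blast
  qed
  show "lin_part ks ` coeffs ks \<subseteq> parts (lin_prod ks)"
  proof (rule image_subsetI)
    fix A assume A: "A \<in> coeffs ks"
    let ?Ps = "map (\<lambda>i. kernel (bvec (ks ! i)) (bdot (A i))) [0..<?m]"
    have "lin_part ks A = block_prod ?Ps"
      unfolding lin_part_def by (rule block_prod_kernels[symmetric]) simp_all
    moreover have "f2_linear (ks ! i) (bdot (A i))" if "i < ?m" for i
      using A that unfolding coeffs_def bvec_def by (intro f2_linear_bdot) auto
    then have "\<forall>i<?m. ?Ps ! i \<in> parts (lin_dev (ks ! i))"
      by (auto simp: lin_dev_def parts_def)
    ultimately show "lin_part ks A \<in> parts (lin_prod ks)"
      unfolding parts_prod_dev by (intro CollectI exI[of _ ?Ps]) simp
  qed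
qed

lemma card_lin_part:
  assumes A: "A \<in> coeffs ks"
  shows "card (lin_part ks A) = 2 ^ card {i \<in> {..<length ks}. True \<in> set (A i)}"
proof -
  have "card (lin_part ks A) = (\<Prod>i<length ks. card (bdot (A i) ` bvec (ks ! i)))"
    unfolding lin_part_def using finite_bvec by (rule card_kernel_tuple_map)
  also have "\<dots> = (\<Prod>i<length ks. if True \<in> set (A i) then 2 else 1)"
  proof (rule prod.cong[OF refl])
    fix i assume "i \<in> {..<length ks}"
    then have "A i \<in> bvec (ks ! i)"
      using A unfolding coeffs_def by auto
    then show "card (bdot (A i) ` bvec (ks ! i)) = (if True \<in> set (A i) then 2 else 1)"
      by (rule card_bdot_image)
  qed
  also have "\<dots> = (\<Prod>i \<in> {i \<in> {..<length ks}. True \<in> set (A i)}. 2)"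
    using prod.inter_filter[of "{..<length ks}" "\<lambda>_. 2::nat" "\<lambda>i. True \<in> set (A i)"] by simp
  also have "\<dots> = 2 ^ card {i \<in> {..<length ks}. True \<in> set (A i)}"
    by simp
  finally show ?thesis .
qed

lemma card_lin_part_le:
  assumes "A \<in> coeffs ks"
  shows "card (lin_part ks A) \<le> 2 ^ length ks"
    and "card (lin_part ks A) = 2 ^ length ks \<longleftrightarrow> A \<in> full_coeffs ks"
proof -
  let ?S = "{i \<in> {..<length ks}. True \<in> set (A i)}"
  have le: "card ?S \<le> length ks"
    using card_mono[of "{..<length ks}" ?S] by auto
  then show "card (lin_part ks A) \<le> 2 ^ length ks"
    unfolding card_lin_part[OF assms] by simp
  have "card (lin_part ks A) = 2 ^ length ks \<longleftrightarrow> card ?S = length ks"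
    unfolding card_lin_part[OF assms] by simp
  also have "\<dots> \<longleftrightarrow> ?S = {..<length ks}"
  proof
    assume "card ?S = length ks"
    then show "?S = {..<length ks}"
      using card_subset_eq[of "{..<length ks}" ?S] by fastforce
  qed simp
  also have "\<dots> \<longleftrightarrow> (\<forall>i<length ks. True \<in> set (A i))"
    by blast
  also have "\<dots> \<longleftrightarrow> A \<in> full_coeffs ks"
    using assms unfolding coeffs_def full_coeffs_def nonzero_vecs_def PiE_iff by blast
  finally show "card (lin_part ks A) = 2 ^ length ks \<longleftrightarrow> A \<in> full_coeffs ks" .
qed

lemma all_ones_full_coeffs:
  assumes "\<forall>k\<in>set ks. 0 < k"
  shows "restrict (\<lambda>i. replicate (ks ! i) True) {..<length ks} \<in> full_coeffs ks"
  using assms unfolding full_coeffs_def nonzero_vecs_def bvec_def by (simp add: restrict_PiE_iff)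

lemma max_rank_lin_prod:
  assumes "\<forall>k\<in>set ks. 0 < k"
  shows "max_rank (lin_prod ks) = 2 ^ length ks"
  unfolding max_rank_def
proof (rule Max_eqI)
  show "finite (card ` parts (lin_prod ks))"
    unfolding parts_lin_prod coeffs_def by (intro finite_imageI finite_PiE finite_lessThan finite_bvec)
  show "c \<le> 2 ^ length ks" if "c \<in> card ` parts (lin_prod ks)" for c
    using that card_lin_part_le(1) unfolding parts_lin_prod by auto
  let ?A = "restrict (\<lambda>i. replicate (ks ! i) True) {..<length ks}"
  have A: "?A \<in> coeffs ks"
    using all_ones_full_coeffs[OF assms] full_coeffs_subset by blast
  then have "card (lin_part ks ?A) = 2 ^ length ks"
    using card_lin_part_le(2) all_ones_full_coeffs[OF assms] by blast
  then show "2 ^ length ks \<in> card ` parts (lin_prod ks)"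
    unfolding parts_lin_prod using imageI[OF imageI[OF A, of "lin_part ks"], of card] by simp
qed

lemma max_parts_lin_prod:
  assumes "\<forall>k\<in>set ks. 0 < k"
  shows "max_parts (lin_prod ks) = lin_part ks ` full_coeffs ks"
proof -
  have "{A \<in> coeffs ks. card (lin_part ks A) = 2 ^ length ks} = full_coeffs ks"
    using card_lin_part_le(2) full_coeffs_subset by blast
  then show ?thesis
    unfolding max_parts_def max_rank_lin_prod[OF assms] parts_lin_prod Compr_image_eq by simp
qed

lemma card_meet_lin_part:
  assumes A: "A \<in> full_coeffs ks" and B: "B \<in> full_coeffs ks"
  shows "card (partition_meet (lin_part ks A) (lin_part ks B))
       = 2 ^ length ks * 2 ^ hamming_dist {..<length ks} A B"
proof -
  let ?m = "length ks"
  have "card (partition_meet (lin_part ks A) (lin_part ks B))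
      = (\<Prod>i<?m. card ((\<lambda>y. (bdot (A i) y, bdot (B i) y)) ` bvec (ks ! i)))"
    unfolding lin_part_def partition_meet_kernel_tuple_map using finite_bvec
    by (rule card_kernel_tuple_map)
  also have "\<dots> = (\<Prod>i<?m. 2 * (if A i \<noteq> B i then 2 else 1))"
  proof (rule prod.cong[OF refl])
    fix i assume "i \<in> {..<?m}"
    then have a: "A i \<in> nonzero_vecs (ks ! i)" and b: "B i \<in> nonzero_vecs (ks ! i)"
      using A B unfolding full_coeffs_def by auto
    show "card ((\<lambda>y. (bdot (A i) y, bdot (B i) y)) ` bvec (ks ! i)) = 2 * (if A i \<noteq> B i then 2 else 1)"
    proof (cases "A i = B i")
      case True
      have "card ((\<lambda>y. (bdot (A i) y, bdot (A i) y)) ` bvec (ks ! i)) = card (bdot (A i) ` bvec (ks ! i))"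
        unfolding image_image[of "\<lambda>c. (c, c)" "bdot (A i)", symmetric]
        by (rule card_image) (simp add: inj_on_def)
      also have "\<dots> = 2"
        using a card_bdot_image unfolding nonzero_vecs_def by simp
      finally show ?thesis
        using True by simp
    next
      case False
      have "card (UNIV :: (bool \<times> bool) set) = 4"
        using card_cartesian_product[of "UNIV :: bool set" "UNIV :: bool set"] by simp
      then show ?thesis
        using bdot_pair_surj[OF a b False] False by simp
    qed
  qed
  also have "\<dots> = 2 ^ ?m * (\<Prod>i<?m. if A i \<noteq> B i then 2 else 1)"
    by (simp add: prod.distrib)
  also have "(\<Prod>i<?m. if A i \<noteq> B i then 2 else 1) = (\<Prod>i \<in> {i \<in> {..<?m}. A i \<noteq> B i}. 2::nat)"
    using prod.inter_filter[of "{..<?m}" "\<lambda>_. 2::nat" "\<lambda>i. A i \<noteq> B i"] by simp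
  finally show ?thesis
    unfolding hamming_dist_def by simp
qed

lemma adjacent_lin_part:
  assumes "A \<in> full_coeffs ks" "B \<in> full_coeffs ks"
  shows "adjacent (lin_part ks A) (lin_part ks B) \<longleftrightarrow> hamming_dist {..<length ks} A B = 1"
proof -
  have "card (lin_part ks A) = 2 ^ length ks"
    using assms(1) full_coeffs_subset card_lin_part_le(2) by blast
  then have "adjacent (lin_part ks A) (lin_part ks B)
      \<longleftrightarrow> (2::nat) ^ length ks * 2 ^ hamming_dist {..<length ks} A B = 2 ^ length ks * 2 ^ 1"
    unfolding adjacent_def card_meet_lin_part[OF assms] by (simp add: mult.commute)
  also have "\<dots> \<longleftrightarrow> (2::nat) ^ hamming_dist {..<length ks} A B = 2 ^ 1"
    by simp
  also have "\<dots> \<longleftrightarrow> hamming_dist {..<length ks} A B = 1"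
    by (rule power_inject_exp) simp
  finally show ?thesis .
qed

lemma inj_on_lin_part: "inj_on (lin_part ks) (full_coeffs ks)"
proof (rule inj_onI)
  fix A B assume A: "A \<in> full_coeffs ks" and B: "B \<in> full_coeffs ks"
    and eq: "lin_part ks A = lin_part ks B"
  have "(2::nat) ^ length ks * 2 ^ hamming_dist {..<length ks} A B
      = 2 ^ length ks * 2 ^ hamming_dist {..<length ks} A A"
    using card_meet_lin_part[OF A B] card_meet_lin_part[OF A A] eq by simp
  then have "hamming_dist {..<length ks} A B = hamming_dist {..<length ks} A A"
    by simp
  then show "A = B"
    using hamming_dist_eq_0[OF finite_lessThan] A B unfolding full_coeffs_def by metis
qed

lemma lin_part_separates:
  assumes x: "x \<in> states (lin_prod ks)" and y: "y \<in> states (lin_prod ks)" and "x \<noteq> y"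
  obtains A where "A \<in> coeffs ks" "\<not> same_block (lin_part ks A) x y"
proof -
  let ?m = "length ks"
  have lx: "length x = ?m" "\<And>i. i < ?m \<Longrightarrow> length (x ! i) = ks ! i"
    and ly: "length y = ?m" "\<And>i. i < ?m \<Longrightarrow> length (y ! i) = ks ! i"
    using x y unfolding states_lin_prod tuples_def bvec_def by auto
  have "\<exists>i<?m. x ! i \<noteq> y ! i"
    using lx(1) ly(1) \<open>x \<noteq> y\<close> by (rule nth_neq_if_neq)
  then obtain i where i: "i < ?m" "x ! i \<noteq> y ! i"
    by blast
  have "\<exists>j<ks ! i. x ! i ! j \<noteq> y ! i ! j"
    using lx(2)[OF i(1)] ly(2)[OF i(1)] i(2) by (rule nth_neq_if_neq)
  then obtain j where j: "j < ks ! i" "x ! i ! j \<noteq> y ! i ! j"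
    by blast
  define A where "A = restrict (\<lambda>l. if l = i then unit_vec (ks ! l) j else replicate (ks ! l) False) {..<?m}"
  have A: "A \<in> coeffs ks"
    unfolding A_def coeffs_def using unit_vec_bvec replicate_False_bvec by (auto simp: restrict_PiE_iff)
  have "bdot (A i) (z ! i) = z ! i ! j" if "length (z ! i) = ks ! i" for z
    using i j that bdot_commute bdot_unit_vec[of j "z ! i"] unfolding A_def by simp
  then have "tuple_map ?m (\<lambda>i. bdot (A i)) x \<noteq> tuple_map ?m (\<lambda>i. bdot (A i)) y"
    using lx(2)[OF i(1)] ly(2)[OF i(1)] i j unfolding tuple_map_eq_iff by auto
  then have "\<not> same_block (lin_part ks A) x y"
    unfolding lin_part_def same_block_kernel by blast
  with A that show thesis by blast
qed

lemma separating_lin_prod: "separating (lin_prod ks)"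
  unfolding separating_def
proof (intro conjI ballI impI)
  show "finite (states (lin_prod ks))"
    by (rule finite_states_lin_prod)
  have "restrict (\<lambda>i. replicate (ks ! i) False) {..<length ks} \<in> coeffs ks"
    unfolding coeffs_def using replicate_False_bvec by (simp add: restrict_PiE_iff)
  then show "parts (lin_prod ks) \<noteq> {}"
    unfolding parts_lin_prod by blast
  show "partition_on (states (lin_prod ks)) P" if "P \<in> parts (lin_prod ks)" for P
    using that unfolding parts_lin_prod lin_part_def states_lin_prod by (auto intro: partition_on_kernel)
  show "\<exists>P\<in>parts (lin_prod ks). \<not> same_block P x y"
    if "x \<in> states (lin_prod ks)" "y \<in> states (lin_prod ks)" "x \<noteq> y" for x y
    using lin_part_separates[OF that] unfolding parts_lin_prod by blast
qed

section \<open>Classification of products of binary linear devices\<close>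

lemma count_mset_eq_card: "count (mset xs) t = card {i. i < length xs \<and> xs ! i = t}"
  by (simp add: count_mset count_list_eq_length_filter length_filter_conv_card eq_commute)

lemma pow2_minus_3_eq_iff:
  assumes "0 < k" "2 \<le> t"
  shows "(2::nat) ^ k - 3 = 2 ^ t - 3 \<longleftrightarrow> k = t"
proof -
  have t: "(4::nat) \<le> 2 ^ t"
    using power_increasing[OF assms(2), of "2::nat"] by simp
  show ?thesis
  proof (cases "k = 1")
    case False
    then have "(4::nat) \<le> 2 ^ k"
      using power_increasing[of 2 k "2::nat"] assms(1) by simp
    with t have "(2::nat) ^ k - 3 = 2 ^ t - 3 \<longleftrightarrow> (2::nat) ^ k = 2 ^ t"
      by linarith
    then show ?thesis
      by simp
  qed (use t assms(2) in auto)
qed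

(* A factor with k_i = 1 has a single nonzero vector and so contributes no neighbours;
   only the multiplicities of t >= 2 are detected this way. *)
lemma neighbour_profile_lin_prod:
  assumes pos: "\<forall>k\<in>set ks. 0 < k" and A0: "A0 \<in> full_coeffs ks" and t: "2 \<le> t"
  shows "neighbour_profile (max_parts (lin_prod ks)) adjacent (lin_part ks A0) (2 ^ t - 3)
       = count (mset ks) t * (2 ^ t - 2)"
proof -
  let ?m = "length ks"
  have bij: "bij_betw (lin_part ks) (full_coeffs ks) (max_parts (lin_prod ks))"
    unfolding bij_betw_def max_parts_lin_prod[OF pos] using inj_on_lin_part by blast
  have "neighbour_profile (max_parts (lin_prod ks)) adjacent (lin_part ks A0) (2 ^ t - 3)
      = neighbour_profile (full_coeffs ks) (\<lambda>A B. hamming_dist {..<?m} A B = 1) A0 (2 ^ t - 3)"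
    using bij adjacent_lin_part A0 by (rule neighbour_profile_iso)
  also have "\<dots> = (\<Sum>i | i \<in> {..<?m} \<and> card (nonzero_vecs (ks ! i)) - 2 = 2 ^ t - 3.
                     card (nonzero_vecs (ks ! i)) - 1)"
    using A0 unfolding full_coeffs_def
    by (intro neighbour_profile_hamming) (auto simp: nonzero_vecs_def finite_bvec)
  also have "{i. i \<in> {..<?m} \<and> card (nonzero_vecs (ks ! i)) - 2 = 2 ^ t - 3} = {i. i < ?m \<and> ks ! i = t}"
  proof (rule Collect_cong)
    fix i
    show "(i \<in> {..<?m} \<and> card (nonzero_vecs (ks ! i)) - 2 = 2 ^ t - 3) \<longleftrightarrow> (i < ?m \<and> ks ! i = t)"
    proof (cases "i < ?m")
      case True
      then have k: "0 < ks ! i"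
        using pos nth_mem by blast
      have card: "card (nonzero_vecs (ks ! i)) - 2 = 2 ^ (ks ! i) - 3"
        by (simp add: card_nonzero_vecs)
      show ?thesis
        by (simp only: card pow2_minus_3_eq_iff[OF k t] lessThan_iff True simp_thms)
    qed simp
  qed
  also have "(\<Sum>i | i < ?m \<and> ks ! i = t. card (nonzero_vecs (ks ! i)) - 1)
      = (\<Sum>i | i < ?m \<and> ks ! i = t. 2 ^ t - 2)"
    by (intro sum.cong refl) (auto simp: card_nonzero_vecs)
  finally show ?thesis
    by (simp add: count_mset_eq_card)
qed

context
  fixes ks rs :: "nat list" and \<delta> :: "nat \<Rightarrow> nat"
  assumes len: "length rs = length ks" and bij: "bij_betw \<delta> {..<length ks} {..<length ks}"
    and perm: "\<And>j. j < length ks \<Longrightarrow> rs ! j = ks ! \<delta> j"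
begin

lemma permute_list_states:
  "permute_list \<delta> ` states (lin_prod ks) \<subseteq> states (lin_prod rs)"
proof (rule image_subsetI)
  fix xs assume xs: "xs \<in> states (lin_prod ks)"
  have "\<delta> j < length ks" if "j < length ks" for j
    using bij that unfolding bij_betw_def by auto
  then have "xs ! \<delta> j \<in> bvec (rs ! j)" if "j < length ks" for j
    using xs perm[OF that] that unfolding states_lin_prod tuples_def by simp
  then show "permute_list \<delta> xs \<in> states (lin_prod rs)"
    using xs len unfolding states_lin_prod tuples_def permute_list_def by simp
qed

lemma refines_lin_part_permute:
  assumes A: "A \<in> coeffs ks"
  shows "restrict (\<lambda>j. A (\<delta> j)) {..<length ks} \<in> coeffs rs"
    and "Defs.refines (pcomp (states (lin_prod ks)) (lin_part rs (restrict (\<lambda>j. A (\<delta> j)) {..<length ks}))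
           (permute_list \<delta>)) (lin_part ks A)"
proof -
  let ?m = "length ks" and ?B = "restrict (\<lambda>j. A (\<delta> j)) {..<length ks}"
  have \<delta>: "\<delta> j < ?m" if "j < ?m" for j
    using bij that unfolding bij_betw_def by auto
  have "A (\<delta> j) \<in> bvec (rs ! j)" if "j < ?m" for j
    using A \<delta>[OF that] perm[OF that] unfolding coeffs_def by auto
  then show "?B \<in> coeffs rs"
    unfolding coeffs_def len restrict_PiE_iff by simp
  show "Defs.refines (pcomp (states (lin_prod ks)) (lin_part rs ?B) (permute_list \<delta>)) (lin_part ks A)"
    unfolding lin_part_def states_lin_prod
  proof (rule refines_pcomp_kernel)
    show "permute_list \<delta> ` tuples ?m (\<lambda>i. bvec (ks ! i)) \<subseteq> tuples (length rs) (\<lambda>i. bvec (rs ! i))"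
      using permute_list_states unfolding states_lin_prod .
    fix x y assume x: "x \<in> tuples ?m (\<lambda>i. bvec (ks ! i))" and y: "y \<in> tuples ?m (\<lambda>i. bvec (ks ! i))"
    assume "tuple_map (length rs) (\<lambda>i. bdot (?B i)) (permute_list \<delta> x)
        = tuple_map (length rs) (\<lambda>i. bdot (?B i)) (permute_list \<delta> y)"
    then have eq: "bdot (A (\<delta> j)) (x ! \<delta> j) = bdot (A (\<delta> j)) (y ! \<delta> j)" if "j < ?m" for j
      using that len x y unfolding tuple_map_eq_iff permute_list_def tuples_def by simp
    have "bdot (A i) (x ! i) = bdot (A i) (y ! i)" if "i < ?m" for i
    proof -
      have "i \<in> \<delta> ` {..<?m}"
        using bij that unfolding bij_betw_def by simp
      then obtain j where "i = \<delta> j" "j \<in> {..<?m}"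
        by (rule imageE)
      with eq show ?thesis
        by simp
    qed
    then show "tuple_map ?m (\<lambda>i. bdot (A i)) x = tuple_map ?m (\<lambda>i. bdot (A i)) y"
      unfolding tuple_map_eq_iff by simp
  qed
qed

lemma lin_prod_le_permute: "dev_le (lin_prod ks) (lin_prod rs)"
proof -
  define coeff where "coeff P = (SOME A. A \<in> coeffs ks \<and> P = lin_part ks A)" for P
  define \<alpha> where "\<alpha> P = lin_part rs (restrict (\<lambda>j. coeff P (\<delta> j)) {..<length ks})" for P
  have "\<alpha> P \<in> parts (lin_prod rs) \<and> Defs.refines (pcomp (states (lin_prod ks)) (\<alpha> P) (permute_list \<delta>)) P"
    if "P \<in> parts (lin_prod ks)" for P
  proof -
    have "\<exists>A. A \<in> coeffs ks \<and> P = lin_part ks A"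
      using that unfolding parts_lin_prod by blast
    then have "coeff P \<in> coeffs ks \<and> P = lin_part ks (coeff P)"
      unfolding coeff_def by (rule someI_ex)
    then have A: "coeff P \<in> coeffs ks" "lin_part ks (coeff P) = P"
      by auto
    show ?thesis
      using refines_lin_part_permute[OF A(1)] unfolding \<alpha>_def A(2) parts_lin_prod by blast
  qed
  with permute_list_states show ?thesis
    unfolding dev_le_def by blast
qed

end

lemma mset_eq_if_counts_ge2:
  fixes ks rs :: "nat list"
  assumes len: "length ks = length rs" and pos: "\<forall>k\<in>set ks. 0 < k" "\<forall>r\<in>set rs. 0 < r"
    and counts: "\<And>t. 2 \<le> t \<Longrightarrow> count (mset ks) t = count (mset rs) t"
  shows "mset ks = mset rs"
proof -
  have "0 \<notin> set ks" "0 \<notin> set rs"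
    using pos by auto
  then have "count (mset ks) 0 = count (mset rs) 0"
    by (simp add: count_mset count_list_0_iff)
  then have ne1: "count (mset ks) t = count (mset rs) t" if "t \<noteq> 1" for t
    using counts that by (cases "t = 0") auto
  then have filtered: "filter_mset (\<lambda>t. t \<noteq> 1) (mset ks) = filter_mset (\<lambda>t. t \<noteq> 1) (mset rs)"
    by (intro multiset_eqI) simp
  have size_eq: "size M = size (filter_mset (\<lambda>t. t \<noteq> 1) M) + count M 1" for M :: "nat multiset"
  proof -
    have "M = filter_mset (\<lambda>t. t \<noteq> 1) M + filter_mset (\<lambda>t. \<not> t \<noteq> 1) M"
      by (rule multiset_partition)
    also have "filter_mset (\<lambda>t. \<not> t \<noteq> 1) M = replicate_mset (count M 1) 1"
      using filter_eq_replicate_mset[of 1 M] by simp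
    finally show ?thesis
      by (metis size_replicate_mset size_union)
  qed
  have "count (mset ks) 1 = count (mset rs) 1"
    using size_eq[of "mset ks"] size_eq[of "mset rs"] filtered len by simp
  with ne1 show ?thesis
    by (metis multiset_eqI)
qed

lemma mset_eq_if_lin_prod_equiv:
  assumes eq: "dev_equiv (lin_prod ks) (lin_prod rs)"
    and pos: "\<forall>k\<in>set ks. 0 < k" "\<forall>r\<in>set rs. 0 < r"
  shows "mset ks = mset rs"
proof -
  note iso = dev_equiv_max_parts_iso[OF separating_lin_prod separating_lin_prod eq]
  obtain \<alpha> where \<alpha>: "bij_betw \<alpha> (max_parts (lin_prod ks)) (max_parts (lin_prod rs))"
    and adj: "\<forall>P\<in>max_parts (lin_prod ks). \<forall>Q\<in>max_parts (lin_prod ks).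
                adjacent (\<alpha> P) (\<alpha> Q) \<longleftrightarrow> adjacent P Q"
    using iso(2) by blast
  have len: "length ks = length rs"
    using iso(1) max_rank_lin_prod[OF pos(1)] max_rank_lin_prod[OF pos(2)] by simp
  define A0 where "A0 = restrict (\<lambda>i. replicate (ks ! i) True) {..<length ks}"
  have A0: "A0 \<in> full_coeffs ks"
    unfolding A0_def using pos(1) by (rule all_ones_full_coeffs)
  then have v: "lin_part ks A0 \<in> max_parts (lin_prod ks)"
    using max_parts_lin_prod[OF pos(1)] by blast
  then have "\<alpha> (lin_part ks A0) \<in> lin_part rs ` full_coeffs rs"
    using bij_betwE[OF \<alpha>] max_parts_lin_prod[OF pos(2)] by blast
  then obtain B0 where B0: "\<alpha> (lin_part ks A0) = lin_part rs B0" "B0 \<in> full_coeffs rs"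
    by (rule imageE)
  have profile: "neighbour_profile (max_parts (lin_prod rs)) adjacent (lin_part rs B0) s
      = neighbour_profile (max_parts (lin_prod ks)) adjacent (lin_part ks A0) s" for s
    unfolding B0(1)[symmetric]
    by (rule neighbour_profile_iso[where E = adjacent and E' = adjacent, OF \<alpha> adj[rule_format] v])
  have "count (mset ks) t = count (mset rs) t" if t: "2 \<le> t" for t
  proof -
    have "count (mset ks) t * (2 ^ t - 2) = count (mset rs) t * (2 ^ t - 2)"
      using profile[of "2 ^ t - 3"] neighbour_profile_lin_prod[OF pos(1) A0 t]
        neighbour_profile_lin_prod[OF pos(2) B0(2) t]
      by (simp only:)
    moreover have "(2::nat) ^ 1 < 2 ^ t"
      using t by (intro power_strict_increasing) simp_all
    ultimately show ?thesis
      by simp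
  qed
  then show ?thesis
    using mset_eq_if_counts_ge2[OF len pos] by blast
qed

lemma lin_prod_equiv_permute:
  assumes len: "length ks = length rs" and \<gamma>: "bij_betw \<gamma> {..<length ks} {..<length ks}"
    and perm: "\<And>i. i < length ks \<Longrightarrow> ks ! i = rs ! \<gamma> i"
  shows "dev_equiv (lin_prod ks) (lin_prod rs)"
proof -
  let ?\<delta> = "inv_into {..<length ks} \<gamma>"
  have \<delta>: "bij_betw ?\<delta> {..<length ks} {..<length ks}"
    using \<gamma> by (rule bij_betw_inv_into)
  have "rs ! j = ks ! ?\<delta> j" if "j < length ks" for j
  proof -
    have "?\<delta> j < length ks"
      using bij_betwE[OF \<delta>] that by simp
    moreover have "\<gamma> (?\<delta> j) = j"
      using bij_betw_inv_into_right[OF \<gamma>] that by simp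
    ultimately show ?thesis
      using perm by metis
  qed
  then have "dev_le (lin_prod ks) (lin_prod rs)"
    using lin_prod_le_permute[OF len[symmetric] \<delta>] by blast
  moreover have "dev_le (lin_prod rs) (lin_prod ks)"
    using lin_prod_le_permute[of ks rs \<gamma>] len \<gamma> perm by simp
  ultimately show ?thesis
    unfolding dev_equiv_def ..
qed

theorem corollary1:
  fixes ks rs :: "nat list"
  assumes "ks \<noteq> []" and "rs \<noteq> []"
    and "\<forall>k\<in>set ks. 0 < k" and "\<forall>r\<in>set rs. 0 < r"
  shows "dev_equiv (prod_dev (map lin_dev ks)) (prod_dev (map lin_dev rs)) \<longleftrightarrow>
         (length ks = length rs \<and>
          (\<exists>\<gamma>. bij_betw \<gamma> {..<length ks} {..<length ks} \<and>
               (\<forall>i<length ks. ks ! i = rs ! \<gamma> i)))"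
proof
  assume "dev_equiv (prod_dev (map lin_dev ks)) (prod_dev (map lin_dev rs))"
  then have "mset ks = mset rs"
    using assms(3,4) by (rule mset_eq_if_lin_prod_equiv)
  then show "length ks = length rs \<and>
      (\<exists>\<gamma>. bij_betw \<gamma> {..<length ks} {..<length ks} \<and> (\<forall>i<length ks. ks ! i = rs ! \<gamma> i))"
    using permutation_Ex_bij[of ks rs] mset_eq_length[of ks rs] by auto
next
  assume "length ks = length rs \<and>
      (\<exists>\<gamma>. bij_betw \<gamma> {..<length ks} {..<length ks} \<and> (\<forall>i<length ks. ks ! i = rs ! \<gamma> i))"
  then show "dev_equiv (prod_dev (map lin_dev ks)) (prod_dev (map lin_dev rs))"
    using lin_prod_equiv_permute by blast
qed

end
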